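(* Let $P$ be a pattern and $M$ a $P$-avoiding matrix. Let $z$ be a horizontal 0-run of $M$ and $f\in z$ a 0-entry of this run. Assume there is an embedding $\phi$ of $P$ into $M\Delta f$. Then $P$ has a 1-entry $e$ with $\phi(e)=f$, and moreover every entry of $P$ in the same column as $e$ is mapped by $\phi$ to a column of $M$ that contains an entry of $z$.
   Context: All matrices are binary; rows numbered top to bottom, columns left to right; $(i,j)$ is the entry in row $i$, column $j$; $[k]=\{1,\dots,k\}$. $M\Delta f$ denotes the matrix obtained from $M$ by switching the value of entry $f$. A horizontal 0-run is a maximal set of consecutive 0-entries within one row. An embedding of $P\in\{0,1\}^{k\times\ell}$ into $M\in\{0,1\}^{m\times n}$ is a map $\phi:[k]\times[\ell]\to[m]\times[n]$ sending 1-entries of $P$ to 1-entries of $M$ such that if $e_1=(i_1,j_1)$, $e_2=(i_2,j_2)$ with $\phi(e_1)=(i_1^*,j_1^* )$, $\phi(e_2)=(i_2^*,j_2^* )$, then $i_1<i_2$ implies $i_1^*<i_2^*$ and $j_1<j_2$ implies $j_1^*<j_2^*$. $M$ is $P$-avoiding if there is no embedding of $P$ into $M$ (equivalently, $P$ is not an interval minor of $M$). *)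

theory Defs
  imports Main
begin

text \<open>A binary m x n matrix is a function on index pairs (row, column); only entries in
  {1..m} x {1..n} matter. True = 1-entry, False = 0-entry.\<close>

definition entries :: "nat \<Rightarrow> nat \<Rightarrow> (nat \<times> nat) set" where
  "entries m n = {1..m} \<times> {1..n}"

definition flip :: "(nat \<times> nat \<Rightarrow> bool) \<Rightarrow> nat \<times> nat \<Rightarrow> (nat \<times> nat \<Rightarrow> bool)" where
  "flip M f = M(f := \<not> M f)"

definition embedding ::
  "(nat \<times> nat \<Rightarrow> bool) \<Rightarrow> nat \<Rightarrow> nat \<Rightarrow> (nat \<times> nat \<Rightarrow> bool) \<Rightarrow> nat \<Rightarrow> nat
   \<Rightarrow> (nat \<times> nat \<Rightarrow> nat \<times> nat) \<Rightarrow> bool" where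
  "embedding P k l M m n \<phi> \<longleftrightarrow>
     (\<forall>e\<in>entries k l. \<phi> e \<in> entries m n) \<and>
     (\<forall>e\<in>entries k l. P e \<longrightarrow> M (\<phi> e)) \<and>
     (\<forall>e1\<in>entries k l. \<forall>e2\<in>entries k l.
        (fst e1 < fst e2 \<longrightarrow> fst (\<phi> e1) < fst (\<phi> e2)) \<and>
        (snd e1 < snd e2 \<longrightarrow> snd (\<phi> e1) < snd (\<phi> e2)))"

definition avoids ::
  "(nat \<times> nat \<Rightarrow> bool) \<Rightarrow> nat \<Rightarrow> nat \<Rightarrow> (nat \<times> nat \<Rightarrow> bool) \<Rightarrow> nat \<Rightarrow> nat \<Rightarrow> bool" where
  "avoids P k l M m n \<longleftrightarrow> \<not> (\<exists>\<phi>. embedding P k l M m n \<phi>)"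

definition hzero_run ::
  "(nat \<times> nat \<Rightarrow> bool) \<Rightarrow> nat \<Rightarrow> nat \<Rightarrow> (nat \<times> nat) set \<Rightarrow> bool" where
  "hzero_run M m n z \<longleftrightarrow>
     (\<exists>i a b. i \<in> {1..m} \<and> 1 \<le> a \<and> a \<le> b \<and> b \<le> n \<and> z = {i} \<times> {a..b} \<and>
        (\<forall>j\<in>{a..b}. \<not> M (i, j)) \<and>
        (a = 1 \<or> M (i, a - 1)) \<and> (b = n \<or> M (i, b + 1)))"

end

theory Submission
  imports Defs
begin

text \<open>Since M avoids P, the embedding into the flipped matrix must use the flipped entry f,
  which is a 0-entry of M, as the image of a 1-entry e of P. If the image of some entry of
  the column of e were left of the run z, the entry of M just left of z (a 1-entry, by
  maximality of the run) could replace f as the image of e, giving an embedding of P into M;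
  symmetrically on the right.\<close>

lemma embedding_entries:
  "embedding P k l M m n \<phi> \<Longrightarrow> e \<in> entries k l \<Longrightarrow> \<phi> e \<in> entries m n"
  unfolding embedding_def by blast

lemma embedding_ones:
  "embedding P k l M m n \<phi> \<Longrightarrow> e \<in> entries k l \<Longrightarrow> P e \<Longrightarrow> M (\<phi> e)"
  unfolding embedding_def by blast

lemma embedding_fst_mono:
  "embedding P k l M m n \<phi> \<Longrightarrow> e1 \<in> entries k l \<Longrightarrow> e2 \<in> entries k l \<Longrightarrow>
    fst e1 < fst e2 \<Longrightarrow> fst (\<phi> e1) < fst (\<phi> e2)"
  unfolding embedding_def by blast

lemma embedding_snd_mono:
  "embedding P k l M m n \<phi> \<Longrightarrow> e1 \<in> entries k l \<Longrightarrow> e2 \<in> entries k l \<Longrightarrow>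
    snd e1 < snd e2 \<Longrightarrow> snd (\<phi> e1) < snd (\<phi> e2)"
  unfolding embedding_def by blast

lemma embedding_inj_on:
  assumes "embedding P k l M m n \<phi>"
  shows "inj_on \<phi> (entries k l)"
proof (rule inj_onI)
  fix e1 e2 assume e12: "e1 \<in> entries k l" "e2 \<in> entries k l" "\<phi> e1 = \<phi> e2"
  have "fst e1 = fst e2"
    using embedding_fst_mono[OF assms] e12 by (metis less_irrefl nat_neq_iff)
  moreover have "snd e1 = snd e2"
    using embedding_snd_mono[OF assms] e12 by (metis less_irrefl nat_neq_iff)
  ultimately show "e1 = e2" by (simp add: prod_eq_iff)
qed

lemma embedding_flip_uses_flipped_entry:
  assumes "embedding P k l (flip M f) m n \<phi>" and "\<not> embedding P k l M m n \<phi>"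
  shows "\<exists>e\<in>entries k l. P e \<and> \<phi> e = f \<and> \<not> M f"
proof -
  obtain e where e: "e \<in> entries k l" "P e" "\<not> M (\<phi> e)"
    using assms unfolding embedding_def by blast
  with embedding_ones[OF assms(1)] have "\<phi> e = f"
    unfolding flip_def by (metis fun_upd_other)
  with e show ?thesis by blast
qed

lemma embedding_fun_upd:
  assumes emb: "embedding P k l M' m n \<phi>" and e: "e \<in> entries k l"
    and ones: "\<And>e'. e' \<in> entries k l \<Longrightarrow> P e' \<Longrightarrow> e' \<noteq> e \<Longrightarrow> M (\<phi> e')"
    and t: "t \<in> entries m n" "M t" "fst t = fst (\<phi> e)"
    and left: "\<And>e'. e' \<in> entries k l \<Longrightarrow> snd e' < snd e \<Longrightarrow> snd (\<phi> e') < snd t"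
    and right: "\<And>e'. e' \<in> entries k l \<Longrightarrow> snd e < snd e' \<Longrightarrow> snd t < snd (\<phi> e')"
  shows "embedding P k l M m n (\<phi>(e := t))"
  unfolding embedding_def
proof (intro conjI ballI impI)
  fix e1 assume "e1 \<in> entries k l"
  then show "(\<phi>(e := t)) e1 \<in> entries m n"
    using embedding_entries[OF emb] t(1) by simp
next
  fix e1 assume "e1 \<in> entries k l" "P e1"
  then show "M ((\<phi>(e := t)) e1)" using ones t(2) by (cases "e1 = e") simp_all
next
  fix e1 e2 assume "e1 \<in> entries k l" "e2 \<in> entries k l" "fst e1 < fst e2"
  then show "fst ((\<phi>(e := t)) e1) < fst ((\<phi>(e := t)) e2)"
    using embedding_fst_mono[OF emb] e t(3) by (cases "e1 = e"; cases "e2 = e") auto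
next
  fix e1 e2 assume "e1 \<in> entries k l" "e2 \<in> entries k l" "snd e1 < snd e2"
  then show "snd ((\<phi>(e := t)) e1) < snd ((\<phi>(e := t)) e2)"
    using embedding_snd_mono[OF emb] left right by (cases "e1 = e"; cases "e2 = e") auto
qed

lemma avoids_no_one_beside_flipped_entry:
  assumes avoid: "avoids P k l M m n" and emb: "embedding P k l (flip M f) m n \<phi>"
    and e: "e \<in> entries k l" "\<phi> e = f"
    and t: "t \<in> entries m n" "M t" "fst t = fst f"
    and left: "\<And>e'. e' \<in> entries k l \<Longrightarrow> snd e' < snd e \<Longrightarrow> snd (\<phi> e') < snd t"
    and right: "\<And>e'. e' \<in> entries k l \<Longrightarrow> snd e < snd e' \<Longrightarrow> snd t < snd (\<phi> e')"
  shows False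
proof -
  have "M (\<phi> e')" if "e' \<in> entries k l" "P e'" "e' \<noteq> e" for e'
  proof -
    have "\<phi> e' \<noteq> f"
      using inj_onD[OF embedding_inj_on[OF emb]] that(1,3) e by metis
    then show ?thesis using embedding_ones[OF emb] that(1,2) unfolding flip_def by simp
  qed
  then have "embedding P k l M m n (\<phi>(e := t))"
    using embedding_fun_upd[OF emb e(1)] t left right e(2) by blast
  with avoid show False unfolding avoids_def by blast
qed

lemma avoids_flip_column_in_zero_run:
  assumes avoid: "avoids P k l M m n" and emb: "embedding P k l (flip M f) m n \<phi>"
    and e: "e \<in> entries k l" "\<phi> e = f"
    and r: "r \<in> {1..m}" and ab: "1 \<le> a" "a \<le> b" "b \<le> n" and f: "f \<in> {r} \<times> {a..b}"
    and left_end: "a = 1 \<or> M (r, a - 1)" and right_end: "b = n \<or> M (r, b + 1)"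
    and i: "i \<in> {1..k}"
  shows "snd (\<phi> (i, snd e)) \<in> {a..b}"
proof -
  let ?c = "snd (\<phi> (i, snd e))"
  have ie: "(i, snd e) \<in> entries k l" using i e(1) unfolding entries_def by auto
  have c: "1 \<le> ?c" "?c \<le> n"
    using embedding_entries[OF emb ie] unfolding entries_def by auto
  have left_of_f: "snd (\<phi> e') < snd f" if "e' \<in> entries k l" "snd e' < snd e" for e'
    using embedding_snd_mono[OF emb that(1) e(1)] that(2) e(2) by simp
  have right_of_f: "snd f < snd (\<phi> e')" if "e' \<in> entries k l" "snd e < snd e'" for e'
    using embedding_snd_mono[OF emb e(1) that(1)] that(2) e(2) by simp
  have left_of_c: "snd (\<phi> e') < ?c" if "e' \<in> entries k l" "snd e' < snd e" for e'
    using embedding_snd_mono[OF emb that(1) ie] that(2) by simp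
  have right_of_c: "?c < snd (\<phi> e')" if "e' \<in> entries k l" "snd e < snd e'" for e'
    using embedding_snd_mono[OF emb ie that(1)] that(2) by simp
  have "a \<le> ?c"
  proof (rule ccontr)
    assume "\<not> a \<le> ?c"
    with c ab left_end have "a \<noteq> 1" "M (r, a - 1)" by auto
    show False
    proof (rule avoids_no_one_beside_flipped_entry[OF avoid emb e, of "(r, a - 1)"])
      show "(r, a - 1) \<in> entries m n" using r ab \<open>a \<noteq> 1\<close> unfolding entries_def by auto
    qed (use \<open>M (r, a - 1)\<close> \<open>\<not> a \<le> ?c\<close> f left_of_c right_of_f in fastforce)+
  qed
  moreover have "?c \<le> b"
  proof (rule ccontr)
    assume "\<not> ?c \<le> b"
    with c right_end have "b \<noteq> n" "M (r, b + 1)" by auto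
    show False
    proof (rule avoids_no_one_beside_flipped_entry[OF avoid emb e, of "(r, b + 1)"])
      show "(r, b + 1) \<in> entries m n" using r ab \<open>b \<noteq> n\<close> unfolding entries_def by auto
    qed (use \<open>M (r, b + 1)\<close> \<open>\<not> ?c \<le> b\<close> f left_of_f right_of_c in fastforce)+
  qed
  ultimately show ?thesis by simp
qed

theorem lemma3p7:
  fixes P M :: "nat \<times> nat \<Rightarrow> bool" and k l m n :: nat
    and z :: "(nat \<times> nat) set" and f :: "nat \<times> nat"
    and \<phi> :: "nat \<times> nat \<Rightarrow> nat \<times> nat"
  assumes "avoids P k l M m n"
    and "hzero_run M m n z"
    and "f \<in> z"
    and "embedding P k l (flip M f) m n \<phi>"
  shows "\<exists>e\<in>entries k l. P e \<and> \<phi> e = f \<and>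
           (\<forall>i\<in>{1..k}. \<exists>g\<in>z. snd g = snd (\<phi> (i, snd e)))"
proof -
  obtain r a b where r: "r \<in> {1..m}" and ab: "1 \<le> a" "a \<le> b" "b \<le> n"
    and z: "z = {r} \<times> {a..b}"
    and ends: "a = 1 \<or> M (r, a - 1)" "b = n \<or> M (r, b + 1)"
    using assms(2) unfolding hzero_run_def by blast
  obtain e where e: "e \<in> entries k l" "P e" "\<phi> e = f"
    using embedding_flip_uses_flipped_entry[OF assms(4)] assms(1)
    unfolding avoids_def by blast
  have "\<exists>g\<in>z. snd g = snd (\<phi> (i, snd e))" if "i \<in> {1..k}" for i
  proof -
    have "snd (\<phi> (i, snd e)) \<in> {a..b}"
      using avoids_flip_column_in_zero_run[OF assms(1,4) e(1,3) r ab _ ends that]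
        assms(3) z by blast
    then show ?thesis using z by auto
  qed
  with e show ?thesis by blast
qed

end
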